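(* Suppose $f$ is continuously differentiable with $\nabla f$ Lipschitz continuous with constant $L_{\nabla f}$. Let $\boldsymbol{x}^0\in\mathcal{C}$, $p\le n$, $\boldsymbol{D}\in\mathbb{R}^{n\times p}$ of full column rank with QR-factorization $\boldsymbol{D}=\boldsymbol{Q}\boldsymbol{R}$, $\boldsymbol{R}=[\boldsymbol{r}_1\cdots\boldsymbol{r}_p]$, $\overline{\mathrm{diam}}(\boldsymbol{R})=\max_{1\le i\le p}\|\boldsymbol{r}_i\|$ and $\widehat{\boldsymbol{R}}=\boldsymbol{R}/\overline{\mathrm{diam}}(\boldsymbol{R})$. Then for all $\widehat{\boldsymbol{s}}\in\boldsymbol{Q}^\top(\mathcal{C}-\boldsymbol{x}^0)$ with $\|\widehat{\boldsymbol{s}}\|\le\overline{\mathrm{diam}}(\boldsymbol{R})$, $$\max_{\substack{\boldsymbol{d}\in\boldsymbol{Q}^\top(\mathcal{C}-\boldsymbol{x}^0)\\\|\boldsymbol{d}\|\le1}}\left|\left(\boldsymbol{Q}^\top\nabla f(\boldsymbol{x}^0+\boldsymbol{Q}\widehat{\boldsymbol{s}})-\nabla\widehat m(\widehat{\boldsymbol{s}})\right)^\top\boldsymbol{d}\right|\le\left(\tfrac12L_{\nabla f}\left(2+\sqrt{p}\,\|\widehat{\boldsymbol{R}}^{-1}\|_{\boldsymbol{x}^0,\mathcal{C},\boldsymbol{D}}\right)\right)\overline{\mathrm{diam}}(\boldsymbol{R})$$ and $$\left|f(\boldsymbol{x}^0+\boldsymbol{Q}\widehat{\boldsymbol{s}})-\widehat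 m(\widehat{\boldsymbol{s}})\right|\le\left(\tfrac12L_{\nabla f}\left(1+\sqrt{p}\,\|\widehat{\boldsymbol{R}}^{-1}\|_{\boldsymbol{x}^0,\mathcal{C},\boldsymbol{D}}\right)\right)\overline{\mathrm{diam}}(\boldsymbol{R})^2.$$ In particular, $\widehat m$ belongs to a class of $(\mathcal{C},\boldsymbol{Q})$-fully linear models of $f$ at $\boldsymbol{x}^0$ parametrized by $\overline{\mathrm{diam}}(\boldsymbol{R})$, with constants $\kappa_{ef}=\frac12L_{\nabla f}(1+\sqrt{p}\|\widehat{\boldsymbol{R}}^{-1}\|_{\boldsymbol{x}^0,\mathcal{C},\boldsymbol{D}})$ and $\kappa_{eg}=\frac12L_{\nabla f}(2+\sqrt{p}\|\widehat{\boldsymbol{R}}^{-1}\|_{\boldsymbol{x}^0,\mathcal{C},\boldsymbol{D}})$.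
   Context: $f:\mathbb{R}^n\to\mathbb{R}$ and $\mathcal{C}\subseteq\mathbb{R}^n$ is closed, convex, with nonempty interior. $\|\cdot\|$ is the Euclidean norm for vectors and spectral norm for matrices. QR-factorization $\boldsymbol{D}=\boldsymbol{Q}\boldsymbol{R}$: $\boldsymbol{Q}\in\mathbb{R}^{n\times p}$ with orthonormal columns, $\boldsymbol{R}\in\mathbb{R}^{p\times p}$ (invertible since $\boldsymbol{D}$ has full column rank). $\boldsymbol{Q}^\top(\mathcal{C}-\boldsymbol{x})=\{\boldsymbol{Q}^\top(\boldsymbol{z}-\boldsymbol{x}):\boldsymbol{z}\in\mathcal{C}\}$. Let $\widehat f(\widehat{\boldsymbol{s}})=f(\boldsymbol{x}^0+\boldsymbol{Q}\widehat{\boldsymbol{s}})$ and $\widehat m(\widehat{\boldsymbol{s}})=\widehat f(\boldsymbol{0}_p)+\nabla_S\widehat f(\boldsymbol{0}_p;\boldsymbol{R})^\top\widehat{\boldsymbol{s}}$, where the generalized simplex gradient is $\nabla_S\widehat f(\boldsymbol{0}_p;\boldsymbol{R})=(\boldsymbol{R}^\top)^\dagger\boldsymbol{\delta}$ with $\boldsymbol{\delta}_i=\widehat f(\boldsymbol{r}_i)-\widehat f(\boldsymbol{0}_p)$ and $\dagger$ the Moore–Penrose pseudoinverse. Geometry measure: for $\boldsymbol{M}\in\mathbb{R}^{m\times p}$, $\|\boldsymbol{M}\|_{\boldsymbol{x}^0,\mathcal{C},\boldsymbol{D}}=\frac{1}{\min\{\overline{\mathrm{diam}}(\boldsymbol{R}),1\}}\max\{\|\boldsymbol{M}\boldsymbol{w}\|:\boldsymbol{w}\in\boldsymbol{Q}^\top(\mathcal{C}-\boldsymbol{x}^0),\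 \|\boldsymbol{w}\|\le\min\{\overline{\mathrm{diam}}(\boldsymbol{R}),1\}\}$. Definition: given $\overline\Delta>0$, $\boldsymbol{x}\in\mathcal{C}$, continuously differentiable $f$ and $\boldsymbol{Q}\in\mathbb{R}^{n\times p}$ with orthonormal columns, a family $\{\widehat m_\Delta:\mathbb{R}^p\to\mathbb{R}\}_{\Delta\in(0,\overline\Delta]}$ is a class of $(\mathcal{C},\boldsymbol{Q})$-fully linear models of $f$ at $\boldsymbol{x}$ parameterized by $\Delta$ if there exist $\kappa_{ef},\kappa_{eg}>0$ such that for all $\Delta\in(0,\overline\Delta]$ and $\widehat{\boldsymbol{s}}\in\boldsymbol{Q}^\top(\mathcal{C}-\boldsymbol{x})$ with $\|\widehat{\boldsymbol{s}}\|\le\Delta$: $|f(\boldsymbol{x}+\boldsymbol{Q}\widehat{\boldsymbol{s}})-\widehat m_\Delta(\widehat{\boldsymbol{s}})|\le\kappa_{ef}\Delta^2$ and $\max_{\boldsymbol{d}\in\boldsymbol{Q}^\top(\mathcal{C}-\boldsymbol{x}),\|\boldsymbol{d}\|\le1}|(\boldsymbol{Q}^\top\nabla f(\boldsymbol{x}+\boldsymbol{Q}\widehat{\boldsymbol{s}})-\nabla\widehat m_\Delta(\widehat{\boldsymbol{s}}))^\top\boldsymbol{d}|\le\kappa_{eg}\Delta$. *)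

theory Defs
  imports "HOL-Analysis.Analysis"
begin

text \<open>Matrices: an m x k real matrix is real^'k^'m (rows indexed by 'm).\<close>

definition pinv :: "real^'k^'m \<Rightarrow> real^'m^'k" where
  "pinv A = (THE X. A ** X ** A = A \<and> X ** A ** X = X \<and>
                    transpose (A ** X) = A ** X \<and> transpose (X ** A) = X ** A)"

definition proj_set :: "real^'p^'n \<Rightarrow> (real^'n) set \<Rightarrow> real^'n \<Rightarrow> (real^'p) set" where
  "proj_set Q C x = {transpose Q *v (z - x) | z. z \<in> C}"

definition diam_bar :: "real^'p^'p \<Rightarrow> real" where
  "diam_bar R = Max {norm (column i R) | i. True}"

definition simplex_grad :: "(real^'p \<Rightarrow> real) \<Rightarrow> real^'p^'p \<Rightarrow> real^'p" where
  "simplex_grad fh R = pinv (transpose R) *v (\<chi> i. fh (column i R) - fh 0)"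

text \<open>Geometry measure ||M||_{x0,C,D}, where D = Q R.\<close>
definition geom_norm :: "real^'n \<Rightarrow> (real^'n) set \<Rightarrow> real^'p^'n \<Rightarrow> real^'p^'p \<Rightarrow> real^'p^'m \<Rightarrow> real" where
  "geom_norm x0 C Q R M =
     (1 / min (diam_bar R) 1) *
     Sup {norm (M *v w) | w. w \<in> proj_set Q C x0 \<and> norm w \<le> min (diam_bar R) 1}"

definition fully_linear_bounds ::
  "(real^'n \<Rightarrow> real) \<Rightarrow> (real^'n \<Rightarrow> real^'n) \<Rightarrow> real^'n \<Rightarrow> (real^'n) set \<Rightarrow> real^'p^'n
    \<Rightarrow> (real^'p \<Rightarrow> real) \<Rightarrow> (real^'p \<Rightarrow> real^'p) \<Rightarrow> real \<Rightarrow> real \<Rightarrow> real \<Rightarrow> bool" where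
  "fully_linear_bounds f gradf x C Q m gm \<Delta> kef keg \<longleftrightarrow>
     (\<forall>s \<in> proj_set Q C x. norm s \<le> \<Delta> \<longrightarrow>
        \<bar>f (x + Q *v s) - m s\<bar> \<le> kef * \<Delta>\<^sup>2 \<and>
        (\<forall>d \<in> proj_set Q C x. norm d \<le> 1 \<longrightarrow>
           \<bar>(transpose Q *v gradf (x + Q *v s) - gm s) \<bullet> d\<bar> \<le> keg * \<Delta>))"

end

theory Submission
  imports Defs
begin

text \<open>Write \<open>a = Q\<^sup>T \<nabla>f(x0)\<close>, \<open>g\<close> for the simplex gradient and \<open>\<Delta> = diam_bar R\<close>. The \<open>i\<close>-th entry of
  \<open>e = R\<^sup>T a - \<delta>\<close> is the first-order Taylor error of \<open>f\<close> at \<open>x0\<close> along \<open>Q r\<^sub>i\<close>, so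
  \<open>\<parallel>e\<parallel> \<le> sqrt p L/2 \<Delta>\<^sup>2\<close>, and \<open>a - g = R\<^sup>-\<^sup>T e\<close> gives
  \<open>\<bar>(a - g)\<^sup>T y\<bar> \<le> sqrt p L/2 \<Delta> \<parallel>(R/\<Delta>)\<^sup>-\<^sup>1 y\<parallel>\<close>; the geometry measure bounds
  the last factor on the star-shaped set \<open>Q\<^sup>T (C - x0)\<close>. Adding the Lipschitz bound on \<open>\<nabla>f\<close>
  (for the gradient error) or the Taylor error of \<open>f\<close> at \<open>x0\<close> along \<open>Q s\<close> (for the value
  error) gives the two estimates.\<close>

lemma taylor_error_le_lipschitz_gradient:
  fixes f :: "'a::real_inner \<Rightarrow> real" and gradf :: "'a \<Rightarrow> 'a"
  assumes deriv: "\<And>x. (f has_derivative (\<lambda>h. gradf x \<bullet> h)) (at x)"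
    and lip: "L-lipschitz_on UNIV gradf"
  shows "\<bar>f (x + h) - f x - gradf x \<bullet> h\<bar> \<le> L / 2 * (norm h)\<^sup>2"
proof -
  have line_deriv: "((\<lambda>t. f (x + t *\<^sub>R h)) has_real_derivative gradf (x + t *\<^sub>R h) \<bullet> h) (at t)"
    for t
  proof -
    have "((\<lambda>t. x + t *\<^sub>R h) has_derivative (\<lambda>t. t *\<^sub>R h)) (at t)"
      by (auto intro!: derivative_eq_intros)
    from has_derivative_compose[OF this deriv]
    show ?thesis by (rule has_derivative_imp_has_field_derivative) simp
  qed
  have slope_change: "\<bar>gradf (x + t *\<^sub>R h) \<bullet> h - gradf x \<bullet> h\<bar> \<le> L * t * (norm h)\<^sup>2"
    if "0 \<le> t" for t
  proof -
    have "\<bar>(gradf (x + t *\<^sub>R h) - gradf x) \<bullet> h\<bar> \<le> norm (gradf (x + t *\<^sub>R h) - gradf x) * norm h"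
      by (rule Cauchy_Schwarz_ineq2)
    also have "\<dots> \<le> (L * norm (t *\<^sub>R h)) * norm h"
      using lipschitz_on_normD[OF lip, of "x + t *\<^sub>R h" x] by (intro mult_right_mono) auto
    also have "\<dots> = L * t * (norm h)\<^sup>2" using that by (simp add: power2_eq_square)
    finally show ?thesis by (simp add: inner_diff_left)
  qed
  text \<open>By the slope bound, \<open>u (-1)\<close> decreases and \<open>u 1\<close> increases on \<open>[0, 1]\<close>.\<close>
  define u where "u \<sigma> t = f (x + t *\<^sub>R h) - t * (gradf x \<bullet> h) + \<sigma> * (L / 2 * t\<^sup>2 * (norm h)\<^sup>2)"
    for \<sigma> t
  have u_deriv: "(u \<sigma> has_real_derivative
      gradf (x + t *\<^sub>R h) \<bullet> h - gradf x \<bullet> h + \<sigma> * (L * t * (norm h)\<^sup>2)) (at t)" for \<sigma> t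
    unfolding u_def by (rule derivative_eq_intros line_deriv refl | simp)+
  have "u (-1) 1 \<le> u (-1) 0"
  proof (rule DERIV_nonpos_imp_nonincreasing[of 0 1])
    fix t :: real assume "0 \<le> t" "t \<le> 1"
    then show "\<exists>y. (u (-1) has_real_derivative y) (at t) \<and> y \<le> 0"
      using u_deriv[of "-1" t] slope_change[of t] by (auto simp: abs_le_iff)
  qed simp
  moreover have "u 1 0 \<le> u 1 1"
  proof (rule DERIV_nonneg_imp_nondecreasing[of 0 1])
    fix t :: real assume "0 \<le> t" "t \<le> 1"
    then show "\<exists>y. (u 1 has_real_derivative y) (at t) \<and> y \<ge> 0"
      using u_deriv[of 1 t] slope_change[of t] by (auto simp: abs_le_iff)
  qed simp
  ultimately show ?thesis unfolding u_def abs_le_iff by simp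
qed

lemma inner_transpose_mult:
  fixes M :: "real^'p^'n"
  shows "(transpose M *v v) \<bullet> d = v \<bullet> (M *v d)"
  by (simp only: transpose_matrix_vector dot_lmul_matrix)

lemma norm_mult_orthonormal_columns:
  fixes Q :: "real^'p^'n"
  assumes "transpose Q ** Q = mat 1"
  shows "norm (Q *v w) = norm w"
proof -
  have "(Q *v w) \<bullet> (Q *v w) = (transpose Q *v (Q *v w)) \<bullet> w"
    by (rule inner_transpose_mult[symmetric])
  also have "\<dots> = w \<bullet> w" by (simp add: matrix_vector_mul_assoc assms)
  finally show ?thesis by (simp add: norm_eq_sqrt_inner)
qed

lemma norm_le_sqrt_card_mult:
  fixes e :: "real^'p"
  assumes "\<And>i. \<bar>e $ i\<bar> \<le> c"
  shows "norm e \<le> sqrt (real CARD('p)) * c"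
proof -
  have "0 \<le> c" using assms[of undefined] by linarith
  have sq: "(e $ i)\<^sup>2 \<le> c\<^sup>2" for i
    using power_mono[OF assms[of i] abs_ge_zero, of 2] by simp
  have "(norm e)\<^sup>2 = (\<Sum>i\<in>UNIV. (e $ i)\<^sup>2)"
    by (simp add: norm_vec_def L2_set_def sum_nonneg)
  also have "\<dots> \<le> (\<Sum>i\<in>(UNIV::'p set). c\<^sup>2)"
    using sq by (rule sum_mono)
  also have "\<dots> = (sqrt (real CARD('p)) * c)\<^sup>2"
    by (simp add: power_mult_distrib)
  finally have "(norm e)\<^sup>2 \<le> (sqrt (real CARD('p)) * c)\<^sup>2" .
  then show ?thesis by (rule power2_le_imp_le) (simp add: \<open>0 \<le> c\<close>)
qed

lemma transpose_mult_column:
  fixes R :: "real^'p^'q"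
  shows "(transpose R *v a) $ i = column i R \<bullet> a"
  by (simp add: matrix_vector_mult_def transpose_def column_def inner_vec_def mult.commute)

lemma matrix_inv_inverse:
  fixes A :: "'a::field^'n^'n"
  assumes "invertible A"
  shows "A ** matrix_inv A = mat 1" and "matrix_inv A ** A = mat 1"
  using someI_ex[OF assms[unfolded invertible_def]] by (simp_all add: matrix_inv_def)

lemma matrix_inv_unique:
  fixes A B :: "'a::field^'n^'n"
  assumes AB: "A ** B = mat 1" and BA: "B ** A = mat 1"
  shows "matrix_inv A = B"
proof -
  have "invertible A" using AB BA unfolding invertible_def by blast
  then have "matrix_inv A = matrix_inv A ** (A ** B)" by (simp add: AB)
  also have "\<dots> = (matrix_inv A ** A) ** B" by (rule matrix_mul_assoc)
  also have "\<dots> = B" by (simp add: matrix_inv_inverse \<open>invertible A\<close>)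
  finally show ?thesis .
qed

lemma matrix_inv_transpose:
  fixes A :: "'a::field^'n^'n"
  assumes "invertible A"
  shows "matrix_inv (transpose A) = transpose (matrix_inv A)"
  by (rule matrix_inv_unique)
    (metis matrix_transpose_mul transpose_mat matrix_inv_inverse assms)+

lemma matrix_inv_scaleR:
  fixes A :: "real^'n^'n"
  assumes "c \<noteq> 0" and "invertible A"
  shows "matrix_inv (c *\<^sub>R A) = inverse c *\<^sub>R matrix_inv A"
  by (rule matrix_inv_unique) (simp_all add: matrix_scalar_ac matrix_inv_inverse assms)

lemma pinv_invertible:
  fixes A :: "real^'n^'n"
  assumes "invertible A"
  shows "pinv A = matrix_inv A"
  unfolding pinv_def
proof (rule the_equality)
  show "A ** matrix_inv A ** A = A \<and> matrix_inv A ** A ** matrix_inv A = matrix_inv A \<and>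
      transpose (A ** matrix_inv A) = A ** matrix_inv A \<and>
      transpose (matrix_inv A ** A) = matrix_inv A ** A"
    by (simp add: matrix_inv_inverse assms)
next
  fix X assume "A ** X ** A = A \<and> X ** A ** X = X \<and>
      transpose (A ** X) = A ** X \<and> transpose (X ** A) = X ** A"
  then have AXA: "A ** X ** A = A" by blast
  have "X = (matrix_inv A ** A) ** X ** (A ** matrix_inv A)"
    by (simp add: matrix_inv_inverse assms)
  also have "\<dots> = matrix_inv A ** (A ** X ** A) ** matrix_inv A"
    by (simp only: matrix_mul_assoc)
  also have "\<dots> = matrix_inv A"
    by (simp add: AXA matrix_inv_inverse assms)
  finally show "X = matrix_inv A" .
qed

lemma invertible_right_factor_full_rank:
  fixes Q :: "real^'p^'n" and R :: "real^'p^'p"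
  assumes "rank (Q ** R) = CARD('p)"
  shows "invertible R"
proof -
  have "rank R = CARD('p)"
    using assms rank_mul_le_right[of Q R] rank_bound[of R] by linarith
  then have "inj ((*v) R)" by (simp add: full_rank_injective)
  then show ?thesis
    using matrix_left_invertible_injective invertible_left_inverse by blast
qed

lemma scaleR_mem_proj_set:
  fixes Q :: "real^'p^'n"
  assumes "convex C" "x0 \<in> C" "d \<in> proj_set Q C x0" "0 \<le> t" "t \<le> 1"
  shows "t *\<^sub>R d \<in> proj_set Q C x0"
proof -
  obtain z where z: "z \<in> C" "d = transpose Q *v (z - x0)"
    using assms(3) unfolding proj_set_def by blast
  have "(1 - t) *\<^sub>R x0 + t *\<^sub>R z \<in> C"
    using assms z(1) by (intro convexD) auto
  moreover have "t *\<^sub>R d = transpose Q *v ((1 - t) *\<^sub>R x0 + t *\<^sub>R z - x0)"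
    by (simp add: z(2) algebra_simps)
  ultimately show ?thesis unfolding proj_set_def by blast
qed

lemma zero_mem_proj_set: "x0 \<in> C \<Longrightarrow> 0 \<in> proj_set Q C x0"
  unfolding proj_set_def by force

lemma norm_column_le_diam_bar: "norm (column i R) \<le> diam_bar R"
proof -
  have "{norm (column i R) | i. True} = range (\<lambda>i. norm (column i R))" by auto
  then show ?thesis unfolding diam_bar_def by (simp add: Max_ge)
qed

lemma diam_bar_pos:
  fixes R :: "real^'p^'p"
  assumes "invertible R"
  shows "0 < diam_bar R"
proof -
  have "column i R \<noteq> 0" for i
  proof
    assume "column i R = 0"
    then have "R *v axis i 1 = R *v 0" by (simp add: matrix_vector_mult_basis)
    then have "axis i (1::real) = 0"
      using inj_matrix_vector_mult[OF assms] by (meson injD)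
    then show False by (simp add: axis_eq_0_iff)
  qed
  then show ?thesis
    using norm_column_le_diam_bar[of undefined R] by (metis less_le_trans zero_less_norm_iff)
qed

text \<open>Vectors longer than the radius \<open>min (diam_bar R) 1\<close> of the geometry measure are
  rescaled into that ball, which stays in \<open>proj_set Q C x0\<close> since this set is star-shaped about \<open>0\<close>.\<close>
lemma norm_mult_le_geom_norm:
  fixes M :: "real^'p^'m"
  assumes "convex C" "x0 \<in> C" "0 < diam_bar R" "w \<in> proj_set Q C x0"
  shows "norm (M *v w) \<le> geom_norm x0 C Q R M * max (norm w) (min (diam_bar R) 1)"
proof -
  define \<rho> where "\<rho> = min (diam_bar R) 1"
  define S where "S = {norm (M *v v) | v. v \<in> proj_set Q C x0 \<and> norm v \<le> \<rho>}"
  have "0 < \<rho>" using assms(3) by (simp add: \<rho>_def)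
  have geom: "geom_norm x0 C Q R M = Sup S / \<rho>"
    unfolding geom_norm_def S_def \<rho>_def by simp
  have "bdd_above S"
  proof (rule bdd_aboveI)
    fix y assume "y \<in> S"
    then obtain v where "y = norm (M *v v)" "norm v \<le> \<rho>" unfolding S_def by blast
    moreover have "onorm ((*v) M) * norm v \<le> onorm ((*v) M) * \<rho>"
      using \<open>norm v \<le> \<rho>\<close> onorm_pos_le[OF matrix_vector_mul_bounded_linear]
      by (rule mult_left_mono)
    ultimately show "y \<le> onorm ((*v) M) * \<rho>"
      using onorm[OF matrix_vector_mul_bounded_linear, of M v] by linarith
  qed
  define t where "t = \<rho> / max (norm w) \<rho>"
  have t: "0 < t" "t \<le> 1" "t * max (norm w) \<rho> = \<rho>"
    using \<open>0 < \<rho>\<close> by (auto simp: t_def)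
  have "t *\<^sub>R w \<in> proj_set Q C x0"
    using scaleR_mem_proj_set[OF assms(1,2,4)] t by simp
  moreover have "norm (t *\<^sub>R w) \<le> \<rho>"
    using t mult_left_mono[of "norm w" "max (norm w) \<rho>" t] by simp
  ultimately have "norm (M *v (t *\<^sub>R w)) \<le> Sup S"
    using \<open>bdd_above S\<close> by (intro cSup_upper) (auto simp: S_def)
  moreover have "norm (M *v (t *\<^sub>R w)) = t * norm (M *v w)"
    using t by (simp add: matrix_vector_mult_scaleR)
  ultimately have "t * norm (M *v w) \<le> Sup S" by simp
  then have "norm (M *v w) \<le> Sup S / t"
    using t by (simp add: field_simps)
  also have "\<dots> = geom_norm x0 C Q R M * max (norm w) \<rho>"
    using t \<open>0 < \<rho>\<close> by (simp add: geom field_simps)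
  finally show ?thesis unfolding \<rho>_def .
qed

lemma geom_norm_nonneg:
  assumes "convex C" "x0 \<in> C" "0 < diam_bar R"
  shows "0 \<le> geom_norm x0 C Q R M"
  using norm_mult_le_geom_norm[OF assms zero_mem_proj_set[OF assms(2), of Q], of M] assms(3)
  by (auto simp: zero_le_mult_iff)

lemma simplex_grad_invertible:
  fixes R :: "real^'p^'p"
  assumes "invertible R"
  shows "simplex_grad fh R = transpose (matrix_inv R) *v (\<chi> i. fh (column i R) - fh 0)"
  unfolding simplex_grad_def
  by (simp add: pinv_invertible transpose_invertible matrix_inv_transpose assms)

lemma simplex_residual_bound:
  fixes f :: "real^'n \<Rightarrow> real" and gradf :: "real^'n \<Rightarrow> real^'n"
    and Q :: "real^'p^'n" and R :: "real^'p^'p"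
  assumes deriv: "\<And>x. (f has_derivative (\<lambda>h. gradf x \<bullet> h)) (at x)"
    and lip: "L-lipschitz_on UNIV gradf"
    and Q_orth: "transpose Q ** Q = mat 1"
  shows "\<bar>(transpose R *v (transpose Q *v gradf x0)
      - (\<chi> i. f (x0 + Q *v column i R) - f (x0 + Q *v 0))) $ i\<bar> \<le> L / 2 * (diam_bar R)\<^sup>2"
    (is "\<bar>?e $ i\<bar> \<le> _")
proof -
  define r where "r = column i R"
  have "?e $ i = (transpose Q *v gradf x0) \<bullet> r - (f (x0 + Q *v r) - f (x0 + Q *v 0))"
    unfolding r_def
    by (simp only: vector_minus_component transpose_mult_column vec_lambda_beta inner_commute)
  also have "(transpose Q *v gradf x0) \<bullet> r = gradf x0 \<bullet> (Q *v r)"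
    by (rule inner_transpose_mult)
  finally have "\<bar>?e $ i\<bar> = \<bar>f (x0 + Q *v r) - f x0 - gradf x0 \<bullet> (Q *v r)\<bar>" by simp
  also have "\<dots> \<le> L / 2 * (norm (Q *v r))\<^sup>2"
    by (rule taylor_error_le_lipschitz_gradient[OF deriv lip])
  also have "\<dots> \<le> L / 2 * (diam_bar R)\<^sup>2"
    using norm_column_le_diam_bar[of i R] lipschitz_on_nonneg[OF lip]
    by (auto simp: norm_mult_orthonormal_columns[OF Q_orth] r_def intro!: mult_left_mono power_mono)
  finally show ?thesis .
qed

lemma simplex_grad_error:
  fixes f :: "real^'n \<Rightarrow> real" and gradf :: "real^'n \<Rightarrow> real^'n"
    and Q :: "real^'p^'n" and R :: "real^'p^'p"
  assumes deriv: "\<And>x. (f has_derivative (\<lambda>h. gradf x \<bullet> h)) (at x)"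
    and lip: "L-lipschitz_on UNIV gradf"
    and Q_orth: "transpose Q ** Q = mat 1"
    and R_inv: "invertible R"
  shows "\<bar>(transpose Q *v gradf x0 - simplex_grad (\<lambda>s. f (x0 + Q *v s)) R) \<bullet> y\<bar>
    \<le> sqrt (real CARD('p)) * (L / 2 * (diam_bar R)\<^sup>2) * norm (matrix_inv R *v y)"
proof -
  define a where "a = transpose Q *v gradf x0"
  define \<delta> where "\<delta> = (\<chi> i. f (x0 + Q *v column i R) - f (x0 + Q *v 0))"
  define e where "e = transpose R *v a - \<delta>"
  have "transpose (matrix_inv R) ** transpose R = mat 1"
    by (metis matrix_transpose_mul transpose_mat matrix_inv_inverse(1) R_inv)
  moreover have "simplex_grad (\<lambda>s. f (x0 + Q *v s)) R = transpose (matrix_inv R) *v \<delta>"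
    unfolding simplex_grad_invertible[OF R_inv] \<delta>_def ..
  ultimately have "a - simplex_grad (\<lambda>s. f (x0 + Q *v s)) R = transpose (matrix_inv R) *v e"
    by (simp only: e_def matrix_vector_mult_diff_distrib matrix_vector_mul_assoc
        matrix_vector_mul_lid)
  then have "\<bar>(a - simplex_grad (\<lambda>s. f (x0 + Q *v s)) R) \<bullet> y\<bar> = \<bar>e \<bullet> (matrix_inv R *v y)\<bar>"
    by (simp only: inner_transpose_mult)
  also have "\<dots> \<le> norm e * norm (matrix_inv R *v y)"
    by (rule Cauchy_Schwarz_ineq2)
  also have "\<dots> \<le> sqrt (real CARD('p)) * (L / 2 * (diam_bar R)\<^sup>2) * norm (matrix_inv R *v y)"
    using norm_le_sqrt_card_mult[OF simplex_residual_bound[OF deriv lip Q_orth]]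
    unfolding e_def a_def \<delta>_def by (rule mult_right_mono) simp
  finally show ?thesis unfolding a_def .
qed

locale simplex_linear_model =
  fixes f :: "real^'n \<Rightarrow> real" and gradf :: "real^'n \<Rightarrow> real^'n" and L :: real
    and C :: "(real^'n) set" and x0 :: "real^'n" and Q :: "real^'p^'n" and R :: "real^'p^'p"
  assumes deriv: "\<And>x. (f has_derivative (\<lambda>h. gradf x \<bullet> h)) (at x)"
    and lip: "L-lipschitz_on UNIV gradf"
    and C_convex: "convex C" and x0C: "x0 \<in> C"
    and Q_orth: "transpose Q ** Q = mat 1"
    and R_inv: "invertible R"
begin

abbreviation "g \<equiv> simplex_grad (\<lambda>s. f (x0 + Q *v s)) R"
abbreviation "\<Delta> \<equiv> diam_bar R"
abbreviation "\<kappa> \<equiv> geom_norm x0 C Q R (matrix_inv ((1 / diam_bar R) *\<^sub>R R))"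

lemma L_nonneg: "0 \<le> L"
  using lip by (rule lipschitz_on_nonneg)

lemma \<Delta>_pos: "0 < \<Delta>"
  using R_inv by (rule diam_bar_pos)

lemma \<kappa>_nonneg: "0 \<le> \<kappa>"
  using C_convex x0C \<Delta>_pos by (rule geom_norm_nonneg)

lemma error_coeff_nonneg: "0 \<le> sqrt (real CARD('p)) * (L / 2 * \<Delta>) * \<kappa>"
  using L_nonneg \<Delta>_pos \<kappa>_nonneg by simp

lemma simplex_grad_error_geom_norm:
  assumes "y \<in> proj_set Q C x0"
  shows "\<bar>(transpose Q *v gradf x0 - g) \<bullet> y\<bar>
    \<le> sqrt (real CARD('p)) * (L / 2 * \<Delta>) * \<kappa> * max (norm y) (min \<Delta> 1)"
proof -
  have "matrix_inv ((1 / \<Delta>) *\<^sub>R R) = \<Delta> *\<^sub>R matrix_inv R"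
    using \<Delta>_pos by (simp add: matrix_inv_scaleR R_inv)
  then have "norm (matrix_inv ((1 / \<Delta>) *\<^sub>R R) *v y) = \<Delta> * norm (matrix_inv R *v y)"
    using \<Delta>_pos by (simp add: scaleR_matrix_vector_assoc[symmetric])
  then have "\<Delta> * norm (matrix_inv R *v y) \<le> \<kappa> * max (norm y) (min \<Delta> 1)"
    using norm_mult_le_geom_norm[OF C_convex x0C \<Delta>_pos assms] by metis
  then have "sqrt (real CARD('p)) * (L / 2 * \<Delta>) * (\<Delta> * norm (matrix_inv R *v y))
      \<le> sqrt (real CARD('p)) * (L / 2 * \<Delta>) * (\<kappa> * max (norm y) (min \<Delta> 1))"
    using L_nonneg \<Delta>_pos by (intro mult_left_mono) auto
  with simplex_grad_error[OF deriv lip Q_orth R_inv, of x0 y] show ?thesis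
    by (simp add: power2_eq_square mult_ac)
qed

lemma gradient_error_bound:
  assumes s: "s \<in> proj_set Q C x0" "norm s \<le> \<Delta>"
    and d: "d \<in> proj_set Q C x0" "norm d \<le> 1"
  shows "\<bar>(transpose Q *v gradf (x0 + Q *v s) - g) \<bullet> d\<bar>
    \<le> (1/2 * L * (2 + sqrt (real CARD('p)) * \<kappa>)) * \<Delta>"
proof -
  define \<gamma> where "\<gamma> = gradf (x0 + Q *v s) - gradf x0"
  have split: "(transpose Q *v gradf (x0 + Q *v s) - g) \<bullet> d
      = \<gamma> \<bullet> (Q *v d) + (transpose Q *v gradf x0 - g) \<bullet> d"
    unfolding \<gamma>_def inner_transpose_mult[symmetric] matrix_vector_mult_diff_distrib inner_diff_left
    by simp
  have "norm \<gamma> \<le> L * norm s"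
    using lipschitz_on_normD[OF lip, of "x0 + Q *v s" x0]
    by (simp add: \<gamma>_def norm_mult_orthonormal_columns[OF Q_orth])
  also have "\<dots> \<le> L * \<Delta>"
    using s(2) L_nonneg by (rule mult_left_mono)
  finally have "norm \<gamma> * norm (Q *v d) \<le> L * \<Delta> * 1"
    using d(2) L_nonneg \<Delta>_pos
    by (intro mult_mono) (simp_all add: norm_mult_orthonormal_columns[OF Q_orth])
  then have "\<bar>\<gamma> \<bullet> (Q *v d)\<bar> \<le> L * \<Delta>"
    using Cauchy_Schwarz_ineq2[of \<gamma> "Q *v d"] by simp
  moreover have "max (norm d) (min \<Delta> 1) \<le> 1"
    using d(2) by simp
  with simplex_grad_error_geom_norm[OF d(1)]
  have "\<bar>(transpose Q *v gradf x0 - g) \<bullet> d\<bar>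
      \<le> sqrt (real CARD('p)) * (L / 2 * \<Delta>) * \<kappa> * 1"
    using mult_left_mono[OF _ error_coeff_nonneg] by (meson order_trans)
  moreover have "(1/2 * L * (2 + sqrt (real CARD('p)) * \<kappa>)) * \<Delta>
      = L * \<Delta> + sqrt (real CARD('p)) * (L / 2 * \<Delta>) * \<kappa>"
    by (simp add: algebra_simps)
  ultimately show ?thesis
    unfolding split by linarith
qed

lemma value_error_bound:
  assumes s: "s \<in> proj_set Q C x0" "norm s \<le> \<Delta>"
  shows "\<bar>f (x0 + Q *v s) - (f x0 + g \<bullet> s)\<bar>
    \<le> (1/2 * L * (1 + sqrt (real CARD('p)) * \<kappa>)) * \<Delta>\<^sup>2"
proof -
  have split: "f (x0 + Q *v s) - (f x0 + g \<bullet> s)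
      = (f (x0 + Q *v s) - f x0 - gradf x0 \<bullet> (Q *v s)) + (transpose Q *v gradf x0 - g) \<bullet> s"
    unfolding inner_transpose_mult[symmetric] inner_diff_left by simp
  have "\<bar>f (x0 + Q *v s) - f x0 - gradf x0 \<bullet> (Q *v s)\<bar> \<le> L / 2 * (norm (Q *v s))\<^sup>2"
    by (rule taylor_error_le_lipschitz_gradient[OF deriv lip])
  also have "\<dots> \<le> L / 2 * \<Delta>\<^sup>2"
    using s(2) L_nonneg
    by (auto simp: norm_mult_orthonormal_columns[OF Q_orth] intro!: mult_left_mono power_mono)
  finally have "\<bar>f (x0 + Q *v s) - f x0 - gradf x0 \<bullet> (Q *v s)\<bar> \<le> L / 2 * \<Delta>\<^sup>2" .
  moreover have "max (norm s) (min \<Delta> 1) \<le> \<Delta>"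
    using s(2) by simp
  with simplex_grad_error_geom_norm[OF s(1)]
  have "\<bar>(transpose Q *v gradf x0 - g) \<bullet> s\<bar>
      \<le> sqrt (real CARD('p)) * (L / 2 * \<Delta>) * \<kappa> * \<Delta>"
    using mult_left_mono[OF _ error_coeff_nonneg] by (meson order_trans)
  moreover have "(1/2 * L * (1 + sqrt (real CARD('p)) * \<kappa>)) * \<Delta>\<^sup>2
      = L / 2 * \<Delta>\<^sup>2 + sqrt (real CARD('p)) * (L / 2 * \<Delta>) * \<kappa> * \<Delta>"
    by (simp add: algebra_simps power2_eq_square)
  ultimately show ?thesis
    unfolding split by linarith
qed

end

theorem mainTheorem5:
  fixes f :: "real^'n \<Rightarrow> real" and gradf :: "real^'n \<Rightarrow> real^'n"
    and L :: real and C :: "(real^'n) set" and x0 :: "real^'n"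
    and D :: "real^'p^'n" and Q :: "real^'p^'n" and R :: "real^'p^'p"
  assumes deriv: "\<And>x. (f has_derivative (\<lambda>h. gradf x \<bullet> h)) (at x)"
    and cont: "continuous_on UNIV gradf"
    and lip: "L-lipschitz_on UNIV gradf"
    and C_closed: "closed C" and C_convex: "convex C" and C_int: "interior C \<noteq> {}"
    and x0C: "x0 \<in> C"
    and pn: "CARD('p) \<le> CARD('n)"
    and D_rank: "rank D = CARD('p)"
    and QR: "D = Q ** R"
    and Q_orth: "transpose Q ** Q = mat 1"
  defines "g \<equiv> simplex_grad (\<lambda>s. f (x0 + Q *v s)) R"
    and "mh \<equiv> (\<lambda>s. f x0 + simplex_grad (\<lambda>s. f (x0 + Q *v s)) R \<bullet> s)"
    and "\<Delta> \<equiv> diam_bar R"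
    and "\<kappa> \<equiv> geom_norm x0 C Q R (matrix_inv ((1 / diam_bar R) *\<^sub>R R))"
  shows "(\<forall>s \<in> proj_set Q C x0. norm s \<le> \<Delta> \<longrightarrow>
            (\<forall>d \<in> proj_set Q C x0. norm d \<le> 1 \<longrightarrow>
               \<bar>(transpose Q *v gradf (x0 + Q *v s) - g) \<bullet> d\<bar>
                 \<le> (1/2 * L * (2 + sqrt (real CARD('p)) * \<kappa>)) * \<Delta>) \<and>
            \<bar>f (x0 + Q *v s) - mh s\<bar>
                 \<le> (1/2 * L * (1 + sqrt (real CARD('p)) * \<kappa>)) * \<Delta>\<^sup>2)
         \<and> fully_linear_bounds f gradf x0 C Q mh (\<lambda>_. g) \<Delta>
              (1/2 * L * (1 + sqrt (real CARD('p)) * \<kappa>))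
              (1/2 * L * (2 + sqrt (real CARD('p)) * \<kappa>))"
proof -
  have "invertible R"
    using D_rank QR by (simp add: invertible_right_factor_full_rank)
  then interpret simplex_linear_model f gradf L C x0 Q R
    using deriv lip C_convex x0C Q_orth by unfold_locales
  have "fully_linear_bounds f gradf x0 C Q mh (\<lambda>_. g) \<Delta>
      (1/2 * L * (1 + sqrt (real CARD('p)) * \<kappa>)) (1/2 * L * (2 + sqrt (real CARD('p)) * \<kappa>))"
    unfolding fully_linear_bounds_def g_def mh_def \<Delta>_def \<kappa>_def
    using gradient_error_bound value_error_bound by simp
  then show ?thesis
    unfolding fully_linear_bounds_def by blast
qed

end
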